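(* Let $f^*:\{\pm1\}^d\to\mathbb R$. Then $f^*$ satisfies the stable merged-staircase property if and only if it satisfies the sufficient impurity decrease condition for some $\lambda>0$, namely: for every cell $C$ with $\operatorname{Var}\{f^*(\mathbf X)\mid\mathbf X\in C\}>0$, $\max_{k\in[d]\setminus J(C)}\operatorname{Corr}^2\{f^*(\mathbf X),X_k\mid\mathbf X\in C\}\ge\lambda$, where $\mathbf X$ is uniform on $\{\pm1\}^d$.
   Context: $\chi_S(\mathbf x)=\prod_{j\in S}x_j$. Every $f:\{\pm1\}^m\to\mathbb R$ has a unique expansion $f=\sum_S\beta_S\chi_S$; $f$ satisfies MSP if the sets $S$ with $\beta_S\ne0$ can be ordered $S_1,\dots,S_r$ with $|S_i\setminus\bigcup_{j<i}S_j|\le1$ for all $i$. A cell is $C=\{\mathbf x\in\{\pm1\}^d:x_j=z_j,\ j\in J(C)\}$ for some $J(C)\subset[d]$ and signs $z_j$; $f^*|_C$ is the restriction viewed as a function of $x_j$, $j\notin J(C)$. $f^*$ satisfies the stable merged-staircase property if $f^*|_C$ satisfies MSP for every cell $C$. *)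

theory Defs
  imports Complex_Main
begin

(* Points of a Boolean cube with coordinates indexed by a finite set I of naturals:
   x j \<in> {1,-1} for j \<in> I, and x j = 0 outside I (normalisation). *)
definition cube :: "nat set \<Rightarrow> (nat \<Rightarrow> real) set" where
  "cube I = {x. (\<forall>j\<in>I. x j = 1 \<or> x j = -1) \<and> (\<forall>j. j \<notin> I \<longrightarrow> x j = 0)}"

definition chi :: "nat set \<Rightarrow> (nat \<Rightarrow> real) \<Rightarrow> real" where
  "chi S x = (\<Prod>j\<in>S. x j)"

definition msp_sets :: "nat set set \<Rightarrow> bool" where
  "msp_sets F \<longleftrightarrow> (\<exists>Ss. set Ss = F \<and> distinct Ss \<and>
      (\<forall>i<length Ss. card (Ss ! i - \<Union>(set (take i Ss))) \<le> 1))"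

definition msp :: "nat set \<Rightarrow> ((nat \<Rightarrow> real) \<Rightarrow> real) \<Rightarrow> bool" where
  "msp I f \<longleftrightarrow> (\<exists>\<beta> :: nat set \<Rightarrow> real.
      (\<forall>x\<in>cube I. f x = (\<Sum>S\<in>Pow I. \<beta> S * chi S x)) \<and>
      msp_sets {S \<in> Pow I. \<beta> S \<noteq> 0})"

definition is_cell_data :: "nat \<Rightarrow> nat set \<Rightarrow> (nat \<Rightarrow> real) \<Rightarrow> bool" where
  "is_cell_data d J z \<longleftrightarrow> J \<subseteq> {..<d} \<and> (\<forall>j\<in>J. z j = 1 \<or> z j = -1)"

definition cell :: "nat \<Rightarrow> nat set \<Rightarrow> (nat \<Rightarrow> real) \<Rightarrow> (nat \<Rightarrow> real) set" where
  "cell d J z = {x \<in> cube {..<d}. \<forall>j\<in>J. x j = z j}"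

definition restr :: "((nat \<Rightarrow> real) \<Rightarrow> real) \<Rightarrow> nat set \<Rightarrow> (nat \<Rightarrow> real) \<Rightarrow> (nat \<Rightarrow> real) \<Rightarrow> real" where
  "restr f J z = (\<lambda>x. f (\<lambda>j. if j \<in> J then z j else x j))"

definition stable_msp :: "nat \<Rightarrow> ((nat \<Rightarrow> real) \<Rightarrow> real) \<Rightarrow> bool" where
  "stable_msp d f \<longleftrightarrow> (\<forall>J z. is_cell_data d J z \<longrightarrow> msp ({..<d} - J) (restr f J z))"

(* moments under the uniform distribution on a finite set C *)
definition avg :: "(nat \<Rightarrow> real) set \<Rightarrow> ((nat \<Rightarrow> real) \<Rightarrow> real) \<Rightarrow> real" where
  "avg C h = (\<Sum>x\<in>C. h x) / real (card C)"

definition cov :: "(nat \<Rightarrow> real) set \<Rightarrow> ((nat \<Rightarrow> real) \<Rightarrow> real) \<Rightarrow> ((nat \<Rightarrow> real) \<Rightarrow> real) \<Rightarrow> real" where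
  "cov C g h = avg C (\<lambda>x. (g x - avg C g) * (h x - avg C h))"

definition var :: "(nat \<Rightarrow> real) set \<Rightarrow> ((nat \<Rightarrow> real) \<Rightarrow> real) \<Rightarrow> real" where
  "var C g = cov C g g"

definition corr2 :: "(nat \<Rightarrow> real) set \<Rightarrow> ((nat \<Rightarrow> real) \<Rightarrow> real) \<Rightarrow> ((nat \<Rightarrow> real) \<Rightarrow> real) \<Rightarrow> real" where
  "corr2 C g h = (cov C g h)\<^sup>2 / (var C g * var C h)"

definition SID :: "nat \<Rightarrow> ((nat \<Rightarrow> real) \<Rightarrow> real) \<Rightarrow> real \<Rightarrow> bool" where
  "SID d f lam \<longleftrightarrow> (\<forall>J z. is_cell_data d J z \<longrightarrow> var (cell d J z) f > 0 \<longrightarrow>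
      Max ((\<lambda>k. corr2 (cell d J z) f (\<lambda>x. x k)) ` ({..<d} - J)) \<ge> lam)"

end

theory Submission
  imports Defs "HOL-Library.FuncSet"
begin

(* On a cell, x_k has mean zero and variance one, so Corr^2(f*, x_k) > 0 exactly when the
   Walsh coefficient of f*|_C at {k} is nonzero; since there are finitely many cells, SID for
   some lambda > 0 just says that every nonconstant restriction has a nonzero degree-one
   coefficient.  An MSP ordering of the support begins with a singleton, which gives this.
   Conversely, if f*|_C is not MSP, a longest staircase in its support has a union U such that
   no support set S satisfies |S - U| = 1, while some S is not contained in U.  Fixing the
   coordinates in U suitably gives a subcell on which f* is nonconstant, yet each degree-one
   coefficient there is a combination of the coefficients beta_S with S - U = {k}, all zero. *)

section \<open>The Boolean cube and its characters\<close>

lemma cube_coord: "x \<in> cube I \<Longrightarrow> j \<in> I \<Longrightarrow> x j = 1 \<or> x j = -1"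
  unfolding cube_def by blast

lemma cube_coord_notin: "x \<in> cube I \<Longrightarrow> j \<notin> I \<Longrightarrow> x j = 0"
  unfolding cube_def by blast

lemma cube_empty: "cube {} = {\<lambda>_. 0}"
  unfolding cube_def by auto

lemma cube_nonempty: "cube I \<noteq> {}"
proof -
  have "(\<lambda>j. if j \<in> I then 1 else 0) \<in> cube I"
    unfolding cube_def by simp
  then show ?thesis by blast
qed

lemma override_on_in_cube:
  "x \<in> cube V \<Longrightarrow> w \<in> cube U \<Longrightarrow> override_on x w U \<in> cube (U \<union> V)"
  unfolding cube_def override_on_def by auto

lemma bij_betw_PiE_cube:
  "bij_betw (\<lambda>g. override_on (\<lambda>_. 0) g I) (I \<rightarrow>\<^sub>E {1, -1}) (cube I)"
  by (rule bij_betw_byWitness[where f' = "\<lambda>x. restrict x I"])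
     (auto simp: cube_def override_on_def fun_eq_iff PiE_def extensional_def)

lemma finite_cube: "finite I \<Longrightarrow> finite (cube I)"
  using bij_betw_finite[OF bij_betw_PiE_cube, of I] finite_PiE[of I "\<lambda>_. {1, -1 :: real}"]
  by simp

lemma sum_cube_prod:
  fixes h :: "nat \<Rightarrow> real \<Rightarrow> real"
  assumes "finite I"
  shows "(\<Sum>x\<in>cube I. \<Prod>j\<in>I. h j (x j)) = (\<Prod>j\<in>I. h j 1 + h j (-1))"
proof -
  have "(\<Sum>x\<in>cube I. \<Prod>j\<in>I. h j (x j))
      = (\<Sum>g\<in>I \<rightarrow>\<^sub>E {1, -1}. \<Prod>j\<in>I. h j (override_on (\<lambda>_. 0) g I j))"
    by (rule sum.reindex_bij_betw[OF bij_betw_PiE_cube, symmetric])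
  also have "\<dots> = (\<Sum>g\<in>I \<rightarrow>\<^sub>E {1, -1}. \<Prod>j\<in>I. h j (g j))"
    by (intro sum.cong prod.cong) auto
  also have "\<dots> = (\<Prod>j\<in>I. \<Sum>s\<in>{1, -1}. h j s)"
    by (rule prod_sum_PiE[symmetric]) (use assms in auto)
  finally show ?thesis by simp
qed

lemma sum_cube_Un:
  assumes "U \<inter> V = {}"
  shows "(\<Sum>y\<in>cube (U \<union> V). F y) = (\<Sum>w\<in>cube U. \<Sum>x\<in>cube V. F (override_on x w U))"
proof -
  have recombine: "override_on (override_on (\<lambda>_. 0) y V) (override_on (\<lambda>_. 0) y U) U = y"
    if "y \<in> cube (U \<union> V)" for y
    using that by (auto simp: cube_def override_on_def fun_eq_iff)
  have "(\<Sum>y\<in>cube (U \<union> V). F y) = (\<Sum>(w, x)\<in>cube U \<times> cube V. F (override_on x w U))"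
    using assms recombine
    by (intro sum.reindex_bij_witness[where i = "\<lambda>(w, x). override_on x w U"
          and j = "\<lambda>y. (override_on (\<lambda>_. 0) y U, override_on (\<lambda>_. 0) y V)"])
       (fastforce simp: cube_def override_on_def fun_eq_iff disjoint_iff)+
  then show ?thesis by (simp add: sum.cartesian_product)
qed

lemma chi_singleton [simp]: "chi {k} x = x k"
  by (simp add: chi_def)

lemma chi_override_on:
  "finite S \<Longrightarrow> chi S (override_on x w U) = chi (S \<inter> U) w * chi (S - U) x"
  unfolding chi_def by (simp add: prod.Int_Diff[of S _ U])

lemma sum_chi_mult_chi:
  assumes "finite V" "S \<subseteq> V" "T \<subseteq> V"
  shows "(\<Sum>x\<in>cube V. chi S x * chi T x) = (if S = T then 2 ^ card V else 0)"
proof -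
  let ?h = "\<lambda>j (t::real). (if j \<in> S then t else 1) * (if j \<in> T then t else 1)"
  have chi_V: "chi R x = (\<Prod>j\<in>V. if j \<in> R then x j else 1)" if "R \<subseteq> V" for R x
    using assms(1) that by (simp add: chi_def prod.If_cases Int_absorb1)
  have "(\<Sum>x\<in>cube V. chi S x * chi T x) = (\<Sum>x\<in>cube V. \<Prod>j\<in>V. ?h j (x j))"
    by (simp add: chi_V assms(2,3) prod.distrib)
  also have "\<dots> = (\<Prod>j\<in>V. ?h j 1 + ?h j (-1))"
    by (rule sum_cube_prod[OF assms(1)])
  also have "\<dots> = (\<Prod>j\<in>V. if (j \<in> S) = (j \<in> T) then 2 else 0)"
    by (intro prod.cong) auto
  also have "\<dots> = (if S = T then 2 ^ card V else 0)"
    using assms by auto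
  finally show ?thesis .
qed

lemma sum_chi:
  "finite V \<Longrightarrow> T \<subseteq> V \<Longrightarrow> (\<Sum>x\<in>cube V. chi T x) = (if T = {} then 2 ^ card V else 0)"
  using sum_chi_mult_chi[of V "{}" T] by (auto simp: chi_def)

lemma sum_Pow_chi_mult_chi:
  assumes "finite I" "x \<in> cube I" "y \<in> cube I"
  shows "(\<Sum>S\<in>Pow I. chi S y * chi S x) = (if y = x then 2 ^ card I else 0)"
proof -
  have "(\<Sum>S\<in>Pow I. chi S y * chi S x) = (\<Sum>S\<in>Pow I. (\<Prod>j\<in>S. y j * x j) * (\<Prod>j\<in>I - S. 1))"
    by (simp add: chi_def prod.distrib)
  also have "\<dots> = (\<Prod>j\<in>I. y j * x j + 1)"
    by (rule prod_add[OF assms(1), symmetric])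
  also have "\<dots> = (\<Prod>j\<in>I. if y j = x j then 2 else 0)"
    using assms(2,3) by (intro prod.cong) (auto dest!: cube_coord)
  also have "\<dots> = (if y = x then 2 ^ card I else 0)"
  proof -
    have "y = x \<longleftrightarrow> (\<forall>j\<in>I. y j = x j)"
      using assms(2,3) by (metis cube_coord_notin ext)
    then show ?thesis
      using assms(1) by auto
  qed
  finally show ?thesis .
qed

definition fourier_coeff :: "nat set \<Rightarrow> ((nat \<Rightarrow> real) \<Rightarrow> real) \<Rightarrow> nat set \<Rightarrow> real" where
  "fourier_coeff I g S = (\<Sum>y\<in>cube I. g y * chi S y) / 2 ^ card I"

lemma fourier_expansion:
  assumes "finite I" "x \<in> cube I"
  shows "g x = (\<Sum>S\<in>Pow I. fourier_coeff I g S * chi S x)"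
proof -
  have "(\<Sum>S\<in>Pow I. fourier_coeff I g S * chi S x)
      = (\<Sum>y\<in>cube I. g y * (\<Sum>S\<in>Pow I. chi S y * chi S x)) / 2 ^ card I"
    unfolding fourier_coeff_def
    by (simp add: sum_divide_distrib sum_distrib_left sum_distrib_right mult.assoc sum.swap[of _ "Pow I"])
  also have "\<dots> = (\<Sum>y\<in>cube I. if y = x then g x * 2 ^ card I else 0) / 2 ^ card I"
    by (intro arg_cong2[where f = "(/)"] sum.cong) (auto simp: sum_Pow_chi_mult_chi assms)
  also have "\<dots> = g x"
    using assms finite_cube[OF assms(1)] by simp
  finally show ?thesis by simp
qed

lemma fourier_coeff_unique:
  assumes "finite I" "\<And>x. x \<in> cube I \<Longrightarrow> g x = (\<Sum>T\<in>Pow I. \<beta> T * chi T x)" "S \<subseteq> I"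
  shows "fourier_coeff I g S = \<beta> S"
proof -
  have "(\<Sum>y\<in>cube I. g y * chi S y) = (\<Sum>T\<in>Pow I. \<beta> T * (\<Sum>y\<in>cube I. chi T y * chi S y))"
    by (simp add: assms(2) sum_distrib_left sum_distrib_right mult.assoc sum.swap[of _ "cube I"])
  also have "\<dots> = (\<Sum>T\<in>Pow I. if T = S then \<beta> S * 2 ^ card I else 0)"
    using assms(1,3) by (intro sum.cong) (auto simp: sum_chi_mult_chi)
  also have "\<dots> = \<beta> S * 2 ^ card I"
    using assms(1,3) by simp
  finally show ?thesis
    unfolding fourier_coeff_def by simp
qed

lemma msp_iff_fourier_support:
  assumes "finite I"
  shows "msp I g \<longleftrightarrow> msp_sets {S \<in> Pow I. fourier_coeff I g S \<noteq> 0}"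
proof
  assume "msp I g"
  then obtain \<beta> where expansion: "\<forall>x\<in>cube I. g x = (\<Sum>S\<in>Pow I. \<beta> S * chi S x)"
    and "msp_sets {S \<in> Pow I. \<beta> S \<noteq> 0}"
    unfolding msp_def by blast
  moreover have "{S \<in> Pow I. \<beta> S \<noteq> 0} = {S \<in> Pow I. fourier_coeff I g S \<noteq> 0}"
    using fourier_coeff_unique[OF assms] expansion by auto
  ultimately show "msp_sets {S \<in> Pow I. fourier_coeff I g S \<noteq> 0}"
    by simp
next
  assume "msp_sets {S \<in> Pow I. fourier_coeff I g S \<noteq> 0}"
  then show "msp I g"
    unfolding msp_def using fourier_expansion[OF assms] by blast
qed

lemma fourier_coeff_nonempty_if_nonconstant:
  assumes "finite I" "x \<in> cube I" "y \<in> cube I" "g x \<noteq> g y"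
  shows "\<exists>S\<in>Pow I. S \<noteq> {} \<and> fourier_coeff I g S \<noteq> 0"
proof (rule ccontr)
  assume "\<not> ?thesis"
  then have vanish: "fourier_coeff I g S = 0" if "S \<subseteq> I" "S \<noteq> {}" for S
    using that by blast
  have "g v = fourier_coeff I g {}" if "v \<in> cube I" for v
  proof -
    have "g v = (\<Sum>S\<in>Pow I. if S = {} then fourier_coeff I g {} else 0)"
      unfolding fourier_expansion[OF assms(1) that, of g]
      by (intro sum.cong) (auto simp: chi_def vanish)
    then show ?thesis
      using assms(1) by simp
  qed
  then show False
    using assms(2-4) by simp
qed

section \<open>Fourier coefficients of slices\<close>

lemma fourier_coeff_slice_eq_0:
  assumes "finite I" "U \<subseteq> I" "w \<in> cube U" "T \<subseteq> I - U"
    and off_support: "\<And>S. S \<subseteq> I \<Longrightarrow> fourier_coeff I g S \<noteq> 0 \<Longrightarrow> S - U \<noteq> T"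
  shows "fourier_coeff (I - U) (\<lambda>x. g (override_on x w U)) T = 0"
proof -
  let ?c = "fourier_coeff I g"
  have slice: "g (override_on x w U) = (\<Sum>S\<in>Pow I. ?c S * chi (S \<inter> U) w * chi (S - U) x)"
    if "x \<in> cube (I - U)" for x
  proof -
    have "override_on x w U \<in> cube I"
      using override_on_in_cube[OF that assms(3)] assms(2) by (simp add: Un_absorb1)
    then have "g (override_on x w U) = (\<Sum>S\<in>Pow I. ?c S * chi S (override_on x w U))"
      by (rule fourier_expansion[OF assms(1)])
    also have "\<dots> = (\<Sum>S\<in>Pow I. ?c S * chi (S \<inter> U) w * chi (S - U) x)"
      using assms(1) by (intro sum.cong refl) (simp add: chi_override_on finite_subset mult.assoc)
    finally show ?thesis .
  qed
  have "(\<Sum>x\<in>cube (I - U). g (override_on x w U) * chi T x)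
      = (\<Sum>S\<in>Pow I. ?c S * chi (S \<inter> U) w * (\<Sum>x\<in>cube (I - U). chi (S - U) x * chi T x))"
    by (simp add: slice sum_distrib_left sum_distrib_right mult.assoc sum.swap[of _ "cube (I - U)"])
  also have "\<dots> = 0"
  proof (intro sum.neutral ballI)
    fix S assume "S \<in> Pow I"
    then have "S - U \<subseteq> I - U" by blast
    then show "?c S * chi (S \<inter> U) w * (\<Sum>x\<in>cube (I - U). chi (S - U) x * chi T x) = 0"
      using assms(1,4) off_support \<open>S \<in> Pow I\<close> by (auto simp: sum_chi_mult_chi)
  qed
  finally show ?thesis
    unfolding fourier_coeff_def by simp
qed

lemma fourier_coeff_eq_0_if_slices_constant:
  assumes "finite I" "U \<subseteq> I" "S \<subseteq> I" "\<not> S \<subseteq> U"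
    and constant_slices: "\<And>w x y. w \<in> cube U \<Longrightarrow> x \<in> cube (I - U) \<Longrightarrow> y \<in> cube (I - U) \<Longrightarrow>
      g (override_on x w U) = g (override_on y w U)"
  shows "fourier_coeff I g S = 0"
proof -
  obtain x0 where x0: "x0 \<in> cube (I - U)"
    using cube_nonempty by blast
  have "(\<Sum>y\<in>cube I. g y * chi S y) = (\<Sum>y\<in>cube (U \<union> (I - U)). g y * chi S y)"
    using assms(2) by (simp add: Un_absorb1)
  also have "\<dots> = (\<Sum>w\<in>cube U. \<Sum>x\<in>cube (I - U). g (override_on x w U) * chi S (override_on x w U))"
    by (rule sum_cube_Un) blast
  also have "\<dots> = (\<Sum>w\<in>cube U. g (override_on x0 w U) * chi (S \<inter> U) w * (\<Sum>x\<in>cube (I - U). chi (S - U) x))"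
  proof (intro sum.cong refl)
    fix w assume w: "w \<in> cube U"
    have "g (override_on x w U) * chi S (override_on x w U)
        = g (override_on x0 w U) * chi (S \<inter> U) w * chi (S - U) x" if "x \<in> cube (I - U)" for x
      using constant_slices[OF w that x0] assms(1,3) by (simp add: chi_override_on finite_subset)
    then show "(\<Sum>x\<in>cube (I - U). g (override_on x w U) * chi S (override_on x w U))
        = g (override_on x0 w U) * chi (S \<inter> U) w * (\<Sum>x\<in>cube (I - U). chi (S - U) x)"
      by (simp add: sum_distrib_left)
  qed
  also have "\<dots> = 0"
    using assms(1,3,4) by (simp add: sum_chi Diff_mono)
  finally show ?thesis
    unfolding fourier_coeff_def by simp
qed

section \<open>Merged staircases\<close>

definition partial_staircase :: "'a set set \<Rightarrow> 'a set list \<Rightarrow> bool" where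
  "partial_staircase F Ss \<longleftrightarrow> set Ss \<subseteq> F \<and> distinct Ss \<and>
     (\<forall>i<length Ss. card (Ss ! i - \<Union>(set (take i Ss))) \<le> 1)"

lemma msp_sets_iff_partial_staircase:
  "msp_sets F \<longleftrightarrow> (\<exists>Ss. partial_staircase F Ss \<and> set Ss = F)"
  unfolding msp_sets_def partial_staircase_def by blast

lemma partial_staircase_snoc:
  assumes "partial_staircase F Ss" "S \<in> F" "S \<notin> set Ss" "card (S - \<Union>(set Ss)) \<le> 1"
  shows "partial_staircase F (Ss @ [S])"
  using assms unfolding partial_staircase_def by (auto simp: nth_append less_Suc_eq)

lemma msp_sets_singleton:
  assumes "msp_sets F" "\<forall>S\<in>F. finite S" "S \<in> F" "S \<noteq> {}"
  shows "\<exists>k. {k} \<in> F"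
proof -
  obtain Ss where Ss: "partial_staircase F Ss" "set Ss = F"
    using assms(1) msp_sets_iff_partial_staircase by blast
  define i where "i = length (takeWhile (\<lambda>T. T = {}) Ss)"
  have "i \<noteq> length Ss"
  proof
    assume "i = length Ss"
    then have "takeWhile (\<lambda>T. T = {}) Ss = Ss"
      unfolding i_def by (subst takeWhile_eq_take) simp
    then show False
      using assms(3,4) Ss(2) by simp
  qed
  then have "i < length Ss"
    unfolding i_def using length_takeWhile_le le_neq_implies_less by blast
  then have first: "Ss ! i \<noteq> {}"
    unfolding i_def by (rule nth_length_takeWhile)
  have "\<Union>(set (take i Ss)) = {}"
    unfolding i_def by (auto simp flip: takeWhile_eq_take dest: set_takeWhileD)
  moreover have "card (Ss ! i - \<Union>(set (take i Ss))) \<le> 1"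
    using Ss(1) \<open>i < length Ss\<close> unfolding partial_staircase_def by blast
  ultimately have "card (Ss ! i) \<le> 1"
    by (simp only: Diff_empty)
  moreover have "Ss ! i \<in> F"
    using Ss(2) \<open>i < length Ss\<close> by auto
  ultimately have "card (Ss ! i) = 1"
    using first assms(2) by (simp add: le_antisym Suc_leI card_gt_0_iff)
  then show ?thesis
    using \<open>Ss ! i \<in> F\<close> by (metis card_1_singletonE)
qed

lemma not_msp_sets_obstruction:
  assumes "finite F" "\<not> msp_sets F"
  shows "\<exists>U \<subseteq> \<Union>F. (\<forall>S\<in>F. \<forall>k. S - U \<noteq> {k}) \<and> (\<exists>S\<in>F. \<not> S \<subseteq> U)"
proof -
  have bounded: "length Ss \<le> card F" if "partial_staircase F Ss" for Ss
    using that assms(1) unfolding partial_staircase_def by (metis card_mono distinct_card)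
  obtain Ss where Ss: "partial_staircase F Ss"
    and longest: "\<And>Ts. partial_staircase F Ts \<Longrightarrow> length Ts \<le> length Ss"
    using ex_has_greatest_nat[of "partial_staircase F" "[]" length "Suc (card F)"] bounded
    by (force simp: partial_staircase_def less_Suc_eq_le)
  define U where "U = \<Union>(set Ss)"
  have not_extendable: "\<not> card (S - U) \<le> 1" if "S \<in> F" "S \<notin> set Ss" for S
    using partial_staircase_snoc[OF Ss that] longest[of "Ss @ [S]"] unfolding U_def by auto
  have "set Ss \<subseteq> F"
    using Ss unfolding partial_staircase_def by simp
  moreover have "set Ss \<noteq> F"
    using Ss assms(2) msp_sets_iff_partial_staircase by blast
  ultimately obtain S0 where S0: "S0 \<in> F" "S0 \<notin> set Ss"
    by blast
  have "\<not> S0 \<subseteq> U"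
  proof
    assume "S0 \<subseteq> U"
    then have "S0 - U = {}"
      by blast
    then have "card (S0 - U) \<le> 1"
      by (simp only: card.empty zero_le_one)
    then show False
      using not_extendable[OF S0] by blast
  qed
  moreover have "S - U \<noteq> {k}" if "S \<in> F" for S k
    using not_extendable[OF that] by (cases "S \<in> set Ss") (auto simp: U_def)
  moreover have "U \<subseteq> \<Union>F"
    using \<open>set Ss \<subseteq> F\<close> unfolding U_def by blast
  ultimately show ?thesis
    using S0 by blast
qed

lemma msp_imp_fourier_coeff_singleton:
  assumes "finite I" "msp I g" "x \<in> cube I" "y \<in> cube I" "g x \<noteq> g y"
  shows "\<exists>k\<in>I. fourier_coeff I g {k} \<noteq> 0"
proof -
  let ?F = "{S \<in> Pow I. fourier_coeff I g S \<noteq> 0}"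
  obtain S where "S \<in> ?F" "S \<noteq> {}"
    using fourier_coeff_nonempty_if_nonconstant[OF assms(1,3-5)] by blast
  moreover have "msp_sets ?F"
    using assms(1,2) msp_iff_fourier_support by blast
  moreover have "\<forall>S\<in>?F. finite S"
    using assms(1) by (auto intro: finite_subset)
  ultimately obtain k where "{k} \<in> ?F"
    by (meson msp_sets_singleton)
  then show ?thesis
    by blast
qed

lemma msp_if_slices_have_linear_part:
  assumes "finite I"
    and linear_part: "\<And>U w x y. U \<subseteq> I \<Longrightarrow> w \<in> cube U \<Longrightarrow> x \<in> cube (I - U) \<Longrightarrow> y \<in> cube (I - U) \<Longrightarrow>
      g (override_on x w U) \<noteq> g (override_on y w U) \<Longrightarrow>
      \<exists>k\<in>I - U. fourier_coeff (I - U) (\<lambda>x. g (override_on x w U)) {k} \<noteq> 0"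
  shows "msp I g"
proof (rule ccontr)
  let ?F = "{S \<in> Pow I. fourier_coeff I g S \<noteq> 0}"
  assume "\<not> msp I g"
  then have "\<not> msp_sets ?F"
    using msp_iff_fourier_support[OF assms(1)] by blast
  then obtain U where "U \<subseteq> \<Union>?F" and no_singleton: "\<forall>S\<in>?F. \<forall>k. S - U \<noteq> {k}"
    and "\<exists>S\<in>?F. \<not> S \<subseteq> U"
    using not_msp_sets_obstruction[of ?F] assms(1) by auto
  then obtain S0 where S0: "S0 \<subseteq> I" "\<not> S0 \<subseteq> U" "fourier_coeff I g S0 \<noteq> 0"
    by blast
  have "U \<subseteq> I"
    using \<open>U \<subseteq> \<Union>?F\<close> by blast
  have "\<not> (\<forall>w\<in>cube U. \<forall>x\<in>cube (I - U). \<forall>y\<in>cube (I - U).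
      g (override_on x w U) = g (override_on y w U))"
  proof
    assume "\<forall>w\<in>cube U. \<forall>x\<in>cube (I - U). \<forall>y\<in>cube (I - U).
      g (override_on x w U) = g (override_on y w U)"
    then have "fourier_coeff I g S0 = 0"
      by (intro fourier_coeff_eq_0_if_slices_constant[OF assms(1) \<open>U \<subseteq> I\<close> S0(1,2)]) blast
    then show False
      using S0(3) by contradiction
  qed
  then obtain w x y where w: "w \<in> cube U" and "x \<in> cube (I - U)" "y \<in> cube (I - U)"
    "g (override_on x w U) \<noteq> g (override_on y w U)"
    by blast
  then obtain k where k: "k \<in> I - U" "fourier_coeff (I - U) (\<lambda>x. g (override_on x w U)) {k} \<noteq> 0"
    using linear_part[OF \<open>U \<subseteq> I\<close>] by blast
  moreover have "fourier_coeff (I - U) (\<lambda>x. g (override_on x w U)) {k} = 0"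
    using k(1) no_singleton by (intro fourier_coeff_slice_eq_0[OF assms(1) \<open>U \<subseteq> I\<close> w]) auto
  ultimately show False
    by blast
qed

section \<open>Variance and correlation on cells\<close>

lemma var_pos_iff:
  assumes "finite C" "C \<noteq> {}"
  shows "0 < var C f \<longleftrightarrow> (\<exists>a\<in>C. \<exists>b\<in>C. f a \<noteq> f b)"
proof -
  let ?m = "avg C f"
  have card_pos: "0 < real (card C)"
    using assms by (simp add: card_gt_0_iff)
  have "var C f = (\<Sum>x\<in>C. (f x - ?m)\<^sup>2) / real (card C)"
    unfolding var_def cov_def avg_def[of C "\<lambda>x. (f x - ?m) * (f x - ?m)"] by (simp add: power2_eq_square)
  then have "0 < var C f \<longleftrightarrow> 0 < (\<Sum>x\<in>C. (f x - ?m)\<^sup>2)"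
    using card_pos by (simp add: zero_less_divide_iff)
  also have "\<dots> \<longleftrightarrow> (\<exists>x\<in>C. f x \<noteq> ?m)"
  proof -
    have "0 \<le> (\<Sum>x\<in>C. (f x - ?m)\<^sup>2)"
      by (simp add: sum_nonneg)
    moreover have "(\<Sum>x\<in>C. (f x - ?m)\<^sup>2) = 0 \<longleftrightarrow> (\<forall>x\<in>C. f x = ?m)"
      using assms(1) by (simp add: sum_nonneg_eq_0_iff)
    ultimately show ?thesis
      by auto
  qed
  also have "\<dots> \<longleftrightarrow> (\<exists>a\<in>C. \<exists>b\<in>C. f a \<noteq> f b)"
  proof
    assume "\<exists>x\<in>C. f x \<noteq> ?m"
    then obtain a where a: "a \<in> C" "f a \<noteq> ?m"
      by blast
    show "\<exists>a\<in>C. \<exists>b\<in>C. f a \<noteq> f b"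
    proof (rule ccontr)
      assume "\<not> ?thesis"
      then have "\<forall>x\<in>C. f x = f a"
        using a(1) by blast
      then have "(\<Sum>x\<in>C. f x) = (\<Sum>x\<in>C. f a)"
        by (intro sum.cong) simp_all
      then have "?m = f a"
        using card_pos unfolding avg_def by simp
      then show False
        using a(2) by simp
    qed
  next
    assume "\<exists>a\<in>C. \<exists>b\<in>C. f a \<noteq> f b"
    then obtain a b where "a \<in> C" "b \<in> C" "f a \<noteq> f b"
      by blast
    then show "\<exists>x\<in>C. f x \<noteq> ?m"
      by metis
  qed
  finally show ?thesis .
qed

lemma corr2_pos_iff:
  assumes "finite C" "C \<noteq> {}" "\<forall>c\<in>C. h c = 1 \<or> h c = -1" "(\<Sum>c\<in>C. h c) = 0" "0 < var C f"
  shows "0 < corr2 C f h \<longleftrightarrow> (\<Sum>c\<in>C. f c * h c) \<noteq> 0"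
proof -
  have card_pos: "0 < real (card C)"
    using assms by (simp add: card_gt_0_iff)
  have avg_h: "avg C h = 0"
    unfolding avg_def using assms(4) by simp
  have "(\<Sum>c\<in>C. h c * h c) = (\<Sum>c\<in>C. 1)"
    using assms(3) by (intro sum.cong) auto
  then have var_h: "var C h = 1"
    unfolding var_def cov_def avg_h avg_def[of C "\<lambda>x. (h x - 0) * (h x - 0)"] using card_pos by simp
  have "cov C f h = (\<Sum>c\<in>C. f c * h c - avg C f * h c) / real (card C)"
    unfolding cov_def avg_h avg_def[of C "\<lambda>x. (f x - avg C f) * (h x - 0)"] by (simp add: algebra_simps)
  also have "\<dots> = (\<Sum>c\<in>C. f c * h c) / real (card C)"
    by (simp add: sum_subtractf assms(4) flip: sum_distrib_left)
  finally have "cov C f h = (\<Sum>c\<in>C. f c * h c) / real (card C)" .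
  then show ?thesis
    unfolding corr2_def var_h using assms(5) card_pos by (simp add: zero_less_divide_iff)
qed

lemma restr_eq_override_on: "restr f J z x = f (override_on x z J)"
  unfolding restr_def override_on_def ..

lemma restr_override_on:
  "restr f (J \<union> U) (override_on w z J) = (\<lambda>x. restr f J z (override_on x w U))"
  unfolding restr_eq_override_on by (intro ext arg_cong[where f = f]) (auto simp: override_on_def)

lemma is_cell_data_Un:
  assumes "is_cell_data d J z" "U \<subseteq> {..<d}" "w \<in> cube U"
  shows "is_cell_data d (J \<union> U) (override_on w z J)"
  using assms cube_coord[OF assms(3)] unfolding is_cell_data_def by (auto simp: override_on_def)

lemma bij_betw_cube_cell:
  assumes "is_cell_data d J z"
  shows "bij_betw (\<lambda>x. override_on x z J) (cube ({..<d} - J)) (cell d J z)"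
proof (rule bij_betw_byWitness[where f' = "\<lambda>y. override_on y (\<lambda>_. 0) J"])
  show "\<forall>x\<in>cube ({..<d} - J). override_on (override_on x z J) (\<lambda>_. 0) J = x"
    by (auto simp: override_on_def fun_eq_iff dest: cube_coord_notin)
  show "\<forall>y\<in>cell d J z. override_on (override_on y (\<lambda>_. 0) J) z J = y"
    by (auto simp: override_on_def fun_eq_iff cell_def)
  have "override_on x z J \<in> cell d J z" if x: "x \<in> cube ({..<d} - J)" for x
  proof -
    have "override_on x z J j = 1 \<or> override_on x z J j = -1" if "j < d" for j
      using that assms cube_coord[OF x, of j] unfolding is_cell_data_def by (cases "j \<in> J") auto
    moreover have "override_on x z J j = 0" if "\<not> j < d" for j
      using that assms cube_coord_notin[OF x, of j] unfolding is_cell_data_def override_on_def by auto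
    ultimately show ?thesis
      unfolding cell_def cube_def by auto
  qed
  then show "(\<lambda>x. override_on x z J) ` cube ({..<d} - J) \<subseteq> cell d J z"
    by blast
  show "(\<lambda>y. override_on y (\<lambda>_. 0) J) ` cell d J z \<subseteq> cube ({..<d} - J)"
    by (auto simp: override_on_def cube_def cell_def)
qed

lemma sum_cell:
  assumes "is_cell_data d J z"
  shows "(\<Sum>c\<in>cell d J z. h c) = (\<Sum>x\<in>cube ({..<d} - J). h (override_on x z J))"
  by (rule sum.reindex_bij_betw[OF bij_betw_cube_cell[OF assms], symmetric])

lemma finite_cell: "finite (cell d J z)"
  unfolding cell_def using finite_cube[of "{..<d}"] by simp

lemma cell_eq_image:
  assumes "is_cell_data d J z"
  shows "cell d J z = (\<lambda>x. override_on x z J) ` cube ({..<d} - J)"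
  using bij_betw_imp_surj_on[OF bij_betw_cube_cell[OF assms]] by (rule sym)

lemma cell_nonempty:
  assumes "is_cell_data d J z"
  shows "cell d J z \<noteq> {}"
  using cube_nonempty[of "{..<d} - J"] by (simp add: cell_eq_image[OF assms])

lemma var_cell_pos_iff:
  assumes "is_cell_data d J z"
  shows "0 < var (cell d J z) f \<longleftrightarrow>
    (\<exists>x\<in>cube ({..<d} - J). \<exists>y\<in>cube ({..<d} - J). restr f J z x \<noteq> restr f J z y)"
  using var_pos_iff[OF finite_cell cell_nonempty[OF assms], of f]
  unfolding restr_eq_override_on cell_eq_image[OF assms] by blast

lemma corr2_cell_pos_iff:
  assumes "is_cell_data d J z" "0 < var (cell d J z) f" "k \<in> {..<d} - J"
  shows "0 < corr2 (cell d J z) f (\<lambda>x. x k) \<longleftrightarrow> fourier_coeff ({..<d} - J) (restr f J z) {k} \<noteq> 0"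
proof -
  have signs: "\<forall>c\<in>cell d J z. c k = 1 \<or> c k = -1"
    using assms(3) unfolding cell_def by (auto dest: cube_coord)
  have "(\<Sum>c\<in>cell d J z. c k) = (\<Sum>x\<in>cube ({..<d} - J). chi {k} x)"
    using assms(3) sum_cell[OF assms(1), of "\<lambda>c. c k"] by simp
  then have centered: "(\<Sum>c\<in>cell d J z. c k) = 0"
    using sum_chi[of "{..<d} - J" "{k}"] assms(3) by simp
  have "0 < corr2 (cell d J z) f (\<lambda>x. x k) \<longleftrightarrow> (\<Sum>c\<in>cell d J z. f c * c k) \<noteq> 0"
    by (rule corr2_pos_iff[OF finite_cell cell_nonempty[OF assms(1)] signs centered assms(2)])
  also have "(\<Sum>c\<in>cell d J z. f c * c k) = (\<Sum>x\<in>cube ({..<d} - J). restr f J z x * chi {k} x)"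
    using assms(1,3) by (simp add: sum_cell restr_eq_override_on)
  finally show ?thesis
    unfolding fourier_coeff_def by simp
qed

section \<open>Sufficient impurity decrease\<close>

definition correlated_on_cells :: "nat \<Rightarrow> ((nat \<Rightarrow> real) \<Rightarrow> real) \<Rightarrow> bool" where
  "correlated_on_cells d f \<longleftrightarrow> (\<forall>J z. is_cell_data d J z \<longrightarrow> 0 < var (cell d J z) f \<longrightarrow>
     (\<exists>k\<in>{..<d} - J. 0 < corr2 (cell d J z) f (\<lambda>x. x k)))"

lemma stable_msp_imp_correlated_on_cells:
  assumes "stable_msp d f"
  shows "correlated_on_cells d f"
  unfolding correlated_on_cells_def
proof (intro allI impI)
  fix J z
  assume cell: "is_cell_data d J z" and var_pos: "0 < var (cell d J z) f"
  then obtain x y where "x \<in> cube ({..<d} - J)" "y \<in> cube ({..<d} - J)" "restr f J z x \<noteq> restr f J z y"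
    using var_cell_pos_iff by blast
  moreover have "msp ({..<d} - J) (restr f J z)"
    using assms cell unfolding stable_msp_def by blast
  ultimately obtain k where "k \<in> {..<d} - J" "fourier_coeff ({..<d} - J) (restr f J z) {k} \<noteq> 0"
    using msp_imp_fourier_coeff_singleton[of "{..<d} - J"] by blast
  then show "\<exists>k\<in>{..<d} - J. 0 < corr2 (cell d J z) f (\<lambda>x. x k)"
    using corr2_cell_pos_iff[OF cell var_pos] by blast
qed

lemma correlated_on_cells_imp_stable_msp:
  assumes "correlated_on_cells d f"
  shows "stable_msp d f"
  unfolding stable_msp_def
proof (intro allI impI)
  fix J z
  assume cell: "is_cell_data d J z"
  let ?I = "{..<d} - J"
  show "msp ?I (restr f J z)"
  proof (rule msp_if_slices_have_linear_part)
    fix U w x y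
    assume "U \<subseteq> ?I" "w \<in> cube U" "x \<in> cube (?I - U)" "y \<in> cube (?I - U)"
      and nonconstant: "restr f J z (override_on x w U) \<noteq> restr f J z (override_on y w U)"
    define J' where "J' = J \<union> U"
    define z' where "z' = override_on w z J"
    have subcell: "is_cell_data d J' z'"
      unfolding J'_def z'_def using is_cell_data_Un[OF cell _ \<open>w \<in> cube U\<close>] \<open>U \<subseteq> ?I\<close> by blast
    have free: "{..<d} - J' = ?I - U"
      unfolding J'_def by blast
    have slice: "restr f J' z' = (\<lambda>x. restr f J z (override_on x w U))"
      unfolding J'_def z'_def by (rule restr_override_on)
    have "0 < var (cell d J' z') f"
      unfolding var_cell_pos_iff[OF subcell] free slice
      using \<open>x \<in> cube (?I - U)\<close> \<open>y \<in> cube (?I - U)\<close> nonconstant by blast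
    then obtain k where "k \<in> ?I - U" "0 < corr2 (cell d J' z') f (\<lambda>x. x k)"
      using assms subcell free unfolding correlated_on_cells_def by metis
    then show "\<exists>k\<in>?I - U. fourier_coeff (?I - U) (\<lambda>x. restr f J z (override_on x w U)) {k} \<noteq> 0"
      using corr2_cell_pos_iff[OF subcell \<open>0 < var (cell d J' z') f\<close>] free slice by metis
  qed simp
qed

lemma finite_positive_lower_bound:
  fixes v :: "'a \<Rightarrow> real"
  assumes "finite A" "\<And>a. a \<in> A \<Longrightarrow> 0 < v a"
  shows "\<exists>lam>0. \<forall>a\<in>A. lam \<le> v a"
proof -
  have "0 < Min (insert 1 (v ` A))"
    using assms by (simp add: Min_gr_iff)
  moreover have "\<forall>a\<in>A. Min (insert 1 (v ` A)) \<le> v a"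
    using assms(1) by simp
  ultimately show ?thesis
    by blast
qed

lemma correlated_on_cells_iff_SID: "correlated_on_cells d f \<longleftrightarrow> (\<exists>lam>0. SID d f lam)"
proof
  let ?M = "\<lambda>J C. Max ((\<lambda>k. corr2 C f (\<lambda>x. x k)) ` ({..<d} - J))"
  assume correlated: "correlated_on_cells d f"
  let ?A = "{(J, cell d J z) | J z. is_cell_data d J z \<and> 0 < var (cell d J z) f}"
  have "?A \<subseteq> Pow {..<d} \<times> Pow (cube {..<d})"
    unfolding is_cell_data_def cell_def by auto
  then have "finite ?A"
    by (rule finite_subset) (simp add: finite_cube)
  moreover have "0 < ?M J C" if JC: "(J, C) \<in> ?A" for J C
  proof -
    obtain z where "C = cell d J z" "is_cell_data d J z" "0 < var (cell d J z) f"
      using JC by blast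
    then obtain k where k: "k \<in> {..<d} - J" "0 < corr2 C f (\<lambda>x. x k)"
      using correlated unfolding correlated_on_cells_def by blast
    have "corr2 C f (\<lambda>x. x k) \<le> ?M J C"
      using k(1) by (intro Max_ge) auto
    then show ?thesis
      using k(2) by linarith
  qed
  ultimately obtain lam where "0 < lam" "\<forall>(J, C)\<in>?A. lam \<le> ?M J C"
    using finite_positive_lower_bound[of ?A "\<lambda>(J, C). ?M J C"] by auto
  then have "SID d f lam"
    unfolding SID_def by blast
  then show "\<exists>lam>0. SID d f lam"
    using \<open>0 < lam\<close> by blast
next
  assume "\<exists>lam>0. SID d f lam"
  then obtain lam where "0 < lam" "SID d f lam"
    by blast
  show "correlated_on_cells d f"
    unfolding correlated_on_cells_def
  proof (intro allI impI)
    fix J z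
    assume cell: "is_cell_data d J z" and var_pos: "0 < var (cell d J z) f"
    let ?corr = "\<lambda>k. corr2 (cell d J z) f (\<lambda>x. x k)"
    have "{..<d} - J \<noteq> {}"
    proof
      assume no_free: "{..<d} - J = {}"
      have "\<exists>x\<in>cube ({..<d} - J). \<exists>y\<in>cube ({..<d} - J). restr f J z x \<noteq> restr f J z y"
        using var_pos var_cell_pos_iff[OF cell] by blast
      then show False
        unfolding no_free cube_empty by simp
    qed
    then have "Max (?corr ` ({..<d} - J)) \<in> ?corr ` ({..<d} - J)"
      by (intro Max_in) auto
    moreover have "lam \<le> Max (?corr ` ({..<d} - J))"
      using \<open>SID d f lam\<close> cell var_pos unfolding SID_def by blast
    ultimately show "\<exists>k\<in>{..<d} - J. 0 < ?corr k"
      using \<open>0 < lam\<close> by force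
  qed
qed

theorem propositionG2:
  fixes d :: nat and f :: "(nat \<Rightarrow> real) \<Rightarrow> real"
  shows "stable_msp d f \<longleftrightarrow> (\<exists>lam>0. SID d f lam)"
  using stable_msp_imp_correlated_on_cells correlated_on_cells_imp_stable_msp
    correlated_on_cells_iff_SID by blast

end
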